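(* Consider the species $T_{100},T_{010},T_{001}$ with concentrations $x,y,z$, complexes $C_1=2T_{100}$, $C_2=2T_{010}$, $C_3=2T_{001}$, $C_4=T_{100}+T_{010}$, $C_5=T_{100}+T_{001}$, $C_6=T_{010}+T_{001}$, and the network $\mathcal N$ with the 18 reactions $C_1\to C_4,\ C_1\to C_5,\ C_2\to C_4,\ C_2\to C_6,\ C_3\to C_5,\ C_3\to C_6,\ C_4\to C_1,\ C_4\to C_2,\ C_4\to C_5,\ C_4\to C_6,\ C_5\to C_1,\ C_5\to C_3,\ C_5\to C_4,\ C_5\to C_6,\ C_6\to C_2,\ C_6\to C_3,\ C_6\to C_4,\ C_6\to C_5$, with rate constants $k(i,j)=i$ for each reaction $C_i\to C_j$. Then the mass-action system of $\mathcal N$ coincides with the mass-action system of the network $\mathcal N'$ with reactions $C_1\rightleftarrows C_6$, $C_2\rightleftarrows C_5$, $C_3\rightleftarrows C_4$ and rate constants $k(1,6)=1$, $k(6,1)=6$, $k(2,5)=2$, $k(5,2)=5$, $k(3,4)=3$, $k(4,3)=4$; $\mathcal N'$ is weakly reversible with deficiency one; and this mass-action system has exactly one positive equilibrium in each positive stoichiometric compatibility class $\{(x,y,z)\in\mathbb R^3_{>0}: x+y+z=c\}$, $c>0$. *)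

theory Defs
  imports "HOL-Analysis.Analysis"
begin

text \<open>Complexes over the three species T100, T010, T001 (concentrations x, y, z),
  given by their stoichiometric coefficient triples.\<close>
type_synonym cplx = "nat \<times> nat \<times> nat"
type_synonym network = "(cplx \<times> cplx) set"
type_synonym state = "real \<times> real \<times> real"

definition cv :: "cplx \<Rightarrow> state" where
  "cv = (\<lambda>(a, b, c). (real a, real b, real c))"

definition monom :: "state \<Rightarrow> cplx \<Rightarrow> real" where
  "monom s y = (case s of (x1, x2, x3) \<Rightarrow> case y of (a, b, c) \<Rightarrow> x1 ^ a * x2 ^ b * x3 ^ c)"

definition mass_action :: "network \<Rightarrow> (cplx \<Rightarrow> cplx \<Rightarrow> real) \<Rightarrow> state \<Rightarrow> state" where
  "mass_action N k s = (\<Sum>(y, y')\<in>N. (k y y' * monom s y) *\<^sub>R (cv y' - cv y))"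

definition complexes :: "network \<Rightarrow> cplx set" where
  "complexes N = fst ` N \<union> snd ` N"

definition weakly_reversible :: "network \<Rightarrow> bool" where
  "weakly_reversible N \<longleftrightarrow> (\<forall>(y, y')\<in>N. (y', y) \<in> N\<^sup>*)"

definition linkage_classes :: "network \<Rightarrow> cplx set set" where
  "linkage_classes N = complexes N // ((N \<union> N\<inverse>)\<^sup>*)"

definition stoich_subspace :: "network \<Rightarrow> state set" where
  "stoich_subspace N = span {cv y' - cv y | y y'. (y, y') \<in> N}"

definition deficiency :: "network \<Rightarrow> int" where
  "deficiency N = int (card (complexes N)) - int (card (linkage_classes N))
                  - int (dim (stoich_subspace N))"

definition positive :: "state \<Rightarrow> bool" where
  "positive s \<longleftrightarrow> (case s of (x, y, z) \<Rightarrow> x > 0 \<and> y > 0 \<and> z > 0)"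

definition positive_equilibrium :: "network \<Rightarrow> (cplx \<Rightarrow> cplx \<Rightarrow> real) \<Rightarrow> state \<Rightarrow> bool" where
  "positive_equilibrium N k s \<longleftrightarrow> positive s \<and> mass_action N k s = 0"

fun C :: "nat \<Rightarrow> cplx" where
  "C (Suc 0) = (2, 0, 0)"
| "C (Suc (Suc 0)) = (0, 2, 0)"
| "C (Suc (Suc (Suc 0))) = (0, 0, 2)"
| "C (Suc (Suc (Suc (Suc 0)))) = (1, 1, 0)"
| "C (Suc (Suc (Suc (Suc (Suc 0))))) = (1, 0, 1)"
| "C (Suc (Suc (Suc (Suc (Suc (Suc 0)))))) = (0, 1, 1)"
| "C _ = (0, 0, 0)"

definition netN :: network where
  "netN = (\<lambda>(i, j). (C i, C j)) `
     {(1,4),(1,5),(2,4),(2,6),(3,5),(3,6),(4,1),(4,2),(4,5),(4,6),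
      (5,1),(5,3),(5,4),(5,6),(6,2),(6,3),(6,4),(6,5)}"

definition netN' :: network where
  "netN' = (\<lambda>(i, j). (C i, C j)) ` {(1,6),(6,1),(2,5),(5,2),(3,4),(4,3)}"

text \<open>Rate constants k(i,j) = i for a reaction C_i \<rightarrow> C_j (for both networks).\<close>
definition rate :: "cplx \<Rightarrow> cplx \<Rightarrow> real" where
  "rate y y' = (if \<exists>i\<in>{1..6}. C i = y then real (THE i. i \<in> {1..6} \<and> C i = y) else 0)"

end

theory Submission
  imports Defs
begin

(* The three reversible pairs C1 <-> C6, C2 <-> C5, C3 <-> C4 of N' have the reaction vectors
   v1 = (-2,1,1), v2 = (1,-2,1), v3 = (1,1,-2), and mass-action kinetics with rates k(i,j) = i
   gives the field  a v1 + b v2 + c v3  with net fluxes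
     a = x^2 - 6yz,  b = 2y^2 - 5xz,  c = 3z^2 - 4xy.
   Expanding the 18 reactions of N yields the same field, so both systems coincide.
   N' is symmetric, hence weakly reversible; it has 6 complexes, 3 linkage classes and a
   2-dimensional stoichiometric subspace (v1 + v2 + v3 = 0), so its deficiency is 1.
   Since v1, v2 are independent, the equilibria are the points with a = b = c.  These equations
   are homogeneous, so positive equilibria form rays; one exists by the intermediate value
   theorem, and two positive equilibria are proportional: comparing the componentwise ratios,
   the equation relating the variables with the largest and the smallest ratio forces these
   two ratios to agree (a weighted-average argument).  Hence each class x + y + z = c meets
   the equilibrium set in exactly one point. *)

(* A relation R with R O R \<subseteq> Id has no paths of length two except back to the start,
   so its reflexive-transitive closure is its reflexive closure; this yields the linkage
   classes of N'. *)
lemma rtrancl_of_involutive: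
  assumes "R O R \<subseteq> Id"
  shows "R\<^sup>* = R\<^sup>="
proof
  show "R\<^sup>* \<subseteq> R\<^sup>="
  proof (rule subrelI)
    fix a b assume "(a, b) \<in> R\<^sup>*"
    then show "(a, b) \<in> R\<^sup>="
    proof (induction rule: rtrancl_induct)
      case (step b c)
      then show ?case using assms by auto
    qed simp
  qed
qed auto

(* The weighted-average comparison behind uniqueness: if a + b = c + d (nonnegative terms)
   and the equality survives scaling the left monomials by p^2, pr and the right ones by
   q^2, qr, where q <= r <= p, then p <= q. *)
lemma extreme_ratio_le:
  fixes a b c d p q r :: real
  assumes nonneg: "0 \<le> a" "0 \<le> b" "0 \<le> c" "0 \<le> d" and pos: "0 < a + b"
    and balance: "a + b = c + d" and scaled: "p^2 * a + p * r * b = q^2 * c + q * r * d"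
    and order: "0 < q" "q \<le> r" "r \<le> p"
  shows "p \<le> q"
proof -
  have "p * r * (a + b) \<le> p^2 * a + p * r * b"
  proof -
    have "p * r * a \<le> p^2 * a"
      using order nonneg by (intro mult_right_mono) (simp_all add: power2_eq_square)
    then show ?thesis by (simp add: distrib_left)
  qed
  also have "\<dots> = q^2 * c + q * r * d" by (rule scaled)
  also have "\<dots> \<le> q * r * (c + d)"
  proof -
    have "q^2 * c \<le> q * r * c"
      using order nonneg by (intro mult_right_mono) (simp_all add: power2_eq_square)
    then show ?thesis by (simp add: distrib_left)
  qed
  finally have "p * r * (a + b) \<le> q * r * (a + b)" by (simp only: balance)
  then have "p * r \<le> q * r" using pos by (rule mult_right_le_imp_le)
  then show ?thesis using order by (simp add: mult_right_le_imp_le)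
qed

lemma extreme_ratios_equal:
  fixes a b c d p q r :: real
  assumes "0 \<le> a" "0 \<le> b" "0 \<le> c" "0 \<le> d" "0 < a + b"
    and "a + b = c + d" and "p^2 * a + p * r * b = q^2 * c + q * r * d"
    and "0 < p" "0 < q" "min p q \<le> r" "r \<le> max p q"
  shows "p = q"
proof (cases "q \<le> p")
  case True
  then have "p \<le> q" using assms by (intro extreme_ratio_le[of a b c d p r q]) auto
  then show ?thesis using True by simp
next
  case False
  then have "q \<le> p" using assms by (intro extreme_ratio_le[of c d a b q r p]) auto
  then show ?thesis using False by simp
qed

(* The complexes C1..C6 are distinct, so the rate of a reaction C_i -> y' is the index i. *)
lemma C_values: "C 1 = (2,0,0)" "C 2 = (0,2,0)" "C 3 = (0,0,2)" "C 4 = (1,1,0)"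
  "C 5 = (1,0,1)" "C 6 = (0,1,1)"
  by (simp_all add: eval_nat_numeral)

lemma C_inj_on: "inj_on C {1..6}"
proof (rule inj_onI)
  fix i j :: nat assume "i \<in> {1..6}" "j \<in> {1..6}" "C i = C j"
  then show "i = j"
    by (auto simp: le_Suc_eq eval_nat_numeral)
qed

lemma rate_C: assumes "i \<in> {1..6}" shows "rate (C i) y' = real i"
proof -
  have "(THE j. j \<in> {1..6} \<and> C j = C i) = i"
    by (rule the_equality) (use assms C_inj_on in \<open>auto dest: inj_onD\<close>)
  then show ?thesis using assms unfolding rate_def by auto
qed

lemma rate_values:
  "rate (2,0,0) y = 1" "rate (0,2,0) y = 2" "rate (0,0,2) y = 3"
  "rate (1,1,0) y = 4" "rate (1,0,1) y = 5" "rate (0,1,1) y = 6"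
  using rate_C[of 1] rate_C[of 2] rate_C[of 3] rate_C[of 4] rate_C[of 5] rate_C[of 6]
  by (simp_all add: C_values)

lemma netN'_explicit: "netN' = {((2,0,0),(0,1,1)), ((0,1,1),(2,0,0)), ((0,2,0),(1,0,1)),
   ((1,0,1),(0,2,0)), ((0,0,2),(1,1,0)), ((1,1,0),(0,0,2))}"
  by (simp add: netN'_def C_values)

lemma netN_explicit: "netN = {((2,0,0),(1,1,0)), ((2,0,0),(1,0,1)), ((0,2,0),(1,1,0)),
  ((0,2,0),(0,1,1)), ((0,0,2),(1,0,1)), ((0,0,2),(0,1,1)), ((1,1,0),(2,0,0)),
  ((1,1,0),(0,2,0)), ((1,1,0),(1,0,1)), ((1,1,0),(0,1,1)), ((1,0,1),(2,0,0)),
  ((1,0,1),(0,0,2)), ((1,0,1),(1,1,0)), ((1,0,1),(0,1,1)), ((0,1,1),(0,2,0)),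
  ((0,1,1),(0,0,2)), ((0,1,1),(1,1,0)), ((0,1,1),(1,0,1))}"
  by (simp add: netN_def C_values)

definition flux_field :: "real \<Rightarrow> real \<Rightarrow> real \<Rightarrow> state" where
  "flux_field a b c = a *\<^sub>R (-2, 1, 1) + b *\<^sub>R (1, -2, 1) + c *\<^sub>R (1, 1, -2)"

(* Since v1 + v2 + v3 = 0 and v1, v2 are independent, the field vanishes iff a = b = c. *)
lemma flux_field_eq_0_iff: "flux_field a b c = 0 \<longleftrightarrow> a = b \<and> b = c"
  by (auto simp: flux_field_def zero_prod_def)

lemma mass_action_netN':
  "mass_action netN' rate (x, y, z) = flux_field (x^2 - 6*y*z) (2*y^2 - 5*x*z) (3*z^2 - 4*x*y)"
  unfolding mass_action_def netN'_explicit
  by (simp add: rate_values[unfolded One_nat_def] cv_def monom_def flux_field_def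
      algebra_simps power2_eq_square)

lemma mass_action_netN:
  "mass_action netN rate (x, y, z) = flux_field (x^2 - 6*y*z) (2*y^2 - 5*x*z) (3*z^2 - 4*x*y)"
  unfolding mass_action_def netN_explicit
  by (simp add: rate_values[unfolded One_nat_def] cv_def monom_def flux_field_def
      algebra_simps power2_eq_square)

lemma mass_action_netN_eq_netN': "mass_action netN rate = mass_action netN' rate"
proof
  fix s :: state
  obtain x y z where "s = (x, y, z)" by (cases s)
  then show "mass_action netN rate s = mass_action netN' rate s"
    by (simp only: mass_action_netN mass_action_netN')
qed

(* Every reaction of N' is reversed by another reaction of N'. *)
lemma weakly_reversible_netN': "weakly_reversible netN'"
  unfolding weakly_reversible_def netN'_explicit by (auto intro: r_into_rtrancl)

lemma netN'_involutive: "netN' O netN' \<subseteq> Id"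
  unfolding netN'_explicit by auto

lemma netN'_sym: "netN'\<inverse> = netN'"
  unfolding netN'_explicit by auto

lemma complexes_netN': "complexes netN' = {(2,0,0),(0,1,1),(0,2,0),(1,0,1),(0,0,2),(1,1,0)}"
  unfolding complexes_def netN'_explicit by auto

lemma linkage_classes_netN':
  "linkage_classes netN' = {{(2,0,0),(0,1,1)}, {(0,2,0),(1,0,1)}, {(0,0,2),(1,1,0)}}"
proof -
  have classes:
    "netN'\<^sup>= `` {(2,0,0)} = {(2,0,0),(0,1,1)}"
    "netN'\<^sup>= `` {(0,1,1)} = {(2,0,0),(0,1,1)}"
    "netN'\<^sup>= `` {(0,2,0)} = {(0,2,0),(1,0,1)}"
    "netN'\<^sup>= `` {(1,0,1)} = {(0,2,0),(1,0,1)}"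
    "netN'\<^sup>= `` {(0,0,2)} = {(0,0,2),(1,1,0)}"
    "netN'\<^sup>= `` {(1,1,0)} = {(0,0,2),(1,1,0)}"
    by (auto simp: netN'_explicit)
  have "linkage_classes netN' = complexes netN' // (netN'\<^sup>=)"
    unfolding linkage_classes_def netN'_sym
    by (simp add: rtrancl_of_involutive[OF netN'_involutive])
  also have "\<dots> = {{(2,0,0),(0,1,1)}, {(0,2,0),(1,0,1)}, {(0,0,2),(1,1,0)}}"
    unfolding complexes_netN' quotient_def
    by (simp only: UN_insert UN_empty classes Un_empty_right Un_insert_left Un_empty_left)
      (simp add: insert_commute)
  finally show ?thesis .
qed

lemma reaction_vectors_netN':
  "{cv y' - cv y | y y'. (y, y') \<in> netN'} =
     {(-2,1,1), (2,-1,-1), (1,-2,1), (-1,2,-1), (1,1,-2), (-1,-1,2)}"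
proof -
  have "{cv y' - cv y | y y'. (y, y') \<in> netN'} = (\<lambda>(y, y'). cv y' - cv y) ` netN'"
    by force
  then show ?thesis unfolding netN'_explicit by (simp add: cv_def)
qed

(* The stoichiometric subspace is spanned by the independent vectors v1, v2. *)
lemma dim_stoich_subspace_netN': "dim (stoich_subspace netN') = 2"
proof -
  define u :: state where "u = (-2, 1, 1)"
  define v :: state where "v = (1, -2, 1)"
  have vectors: "{cv y' - cv y | y y'. (y, y') \<in> netN'} = {u, -u, v, -v, -(u + v), u + v}"
    unfolding reaction_vectors_netN' u_def v_def by auto
  have "span {u, -u, v, -v, -(u + v), u + v} = span {u, v}"
  proof (rule span_eq[THEN iffD2], rule conjI)
    show "{u, -u, v, -v, -(u + v), u + v} \<subseteq> span {u, v}"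
      by (blast intro: span_base span_neg span_add)
  qed (blast intro: span_base)
  moreover have "independent {u, v}"
  proof -
    have "u \<notin> span {v}"
      by (auto simp: span_singleton u_def v_def)
    then show ?thesis by (auto simp: independent_insert u_def v_def zero_prod_def)
  qed
  moreover have "card {u, v} = 2" by (simp add: u_def v_def)
  ultimately show ?thesis
    unfolding stoich_subspace_def vectors by (simp add: dim_eq_card_independent)
qed

(* Deficiency 6 - 3 - 2 = 1. *)
lemma deficiency_netN': "deficiency netN' = 1"
  by (simp add: deficiency_def complexes_netN' linkage_classes_netN' dim_stoich_subspace_netN'
      doubleton_eq_iff)

definition equilibrium_eqs :: "real \<Rightarrow> real \<Rightarrow> real \<Rightarrow> bool" where
  "equilibrium_eqs x y z \<longleftrightarrow>
     x^2 - 6*y*z = 2*y^2 - 5*x*z \<and> 2*y^2 - 5*x*z = 3*z^2 - 4*x*y"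

lemma positive_equilibrium_netN'_iff:
  "positive_equilibrium netN' rate (x, y, z) \<longleftrightarrow>
     0 < x \<and> 0 < y \<and> 0 < z \<and> equilibrium_eqs x y z"
  unfolding positive_equilibrium_def positive_def mass_action_netN' flux_field_eq_0_iff
    equilibrium_eqs_def by auto

(* The equations are homogeneous of degree 2, so equilibria are closed under scaling. *)
lemma equilibrium_eqs_scale:
  assumes "equilibrium_eqs x y z"
  shows "equilibrium_eqs (t*x) (t*y) (t*z)"
proof -
  have "(t*x)^2 - 6*(t*y)*(t*z) = t^2 * (x^2 - 6*y*z)"
    and "2*(t*y)^2 - 5*(t*x)*(t*z) = t^2 * (2*y^2 - 5*x*z)"
    and "3*(t*z)^2 - 4*(t*x)*(t*y) = t^2 * (3*z^2 - 4*x*y)"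
    by (simp_all add: algebra_simps power2_eq_square)
  then show ?thesis using assms by (simp add: equilibrium_eqs_def)
qed

(* Each of the rearranged equations
     x^2 + 5xz = 2y^2 + 6yz,  2y^2 + 4xy = 3z^2 + 5xz,  x^2 + 4xy = 3z^2 + 6yz
   compares one pair of variables; applied to the pair whose ratios are extreme, it forces
   those ratios to agree. *)
lemma equilibria_proportional:
  fixes x y z p q r :: real
  assumes pos: "0 < x" "0 < y" "0 < z" "0 < p" "0 < q" "0 < r"
    and eq: "equilibrium_eqs x y z" and eq_scaled: "equilibrium_eqs (p*x) (q*y) (r*z)"
  shows "p = q \<and> q = r"
proof -
  have nonneg: "0 \<le> x^2" "0 \<le> 2*y^2" "0 \<le> 3*z^2" "0 \<le> 4*x*y" "0 \<le> 5*x*z" "0 \<le> 6*y*z"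
    "0 < x^2 + 5*x*z" "0 < 2*y^2 + 4*x*y" "0 < x^2 + 4*x*y"
    using pos by (simp_all add: add_pos_pos)
  have x_vs_y: "p = q" if "min p q \<le> r" "r \<le> max p q"
  proof (rule extreme_ratios_equal[OF nonneg(1,5,2,6,7) _ _ pos(4,5) that])
    show "x^2 + 5*x*z = 2*y^2 + 6*y*z" using eq by (simp add: equilibrium_eqs_def)
    show "p^2 * x^2 + p * r * (5*x*z) = q^2 * (2*y^2) + q * r * (6*y*z)"
      using eq_scaled by (simp add: equilibrium_eqs_def algebra_simps power2_eq_square)
  qed
  have y_vs_z: "q = r" if "min q r \<le> p" "p \<le> max q r"
  proof (rule extreme_ratios_equal[OF nonneg(2,4,3,5,8) _ _ pos(5,6) that])
    show "2*y^2 + 4*x*y = 3*z^2 + 5*x*z" using eq by (simp add: equilibrium_eqs_def)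
    show "q^2 * (2*y^2) + q * p * (4*x*y) = r^2 * (3*z^2) + r * p * (5*x*z)"
      using eq_scaled by (simp add: equilibrium_eqs_def algebra_simps power2_eq_square)
  qed
  have x_vs_z: "p = r" if "min p r \<le> q" "q \<le> max p r"
  proof (rule extreme_ratios_equal[OF nonneg(1,4,3,6,9) _ _ pos(4,6) that])
    show "x^2 + 4*x*y = 3*z^2 + 6*y*z" using eq by (simp add: equilibrium_eqs_def)
    show "p^2 * x^2 + p * q * (4*x*y) = r^2 * (3*z^2) + r * q * (6*y*z)"
      using eq_scaled by (simp add: equilibrium_eqs_def algebra_simps power2_eq_square)
  qed
  show ?thesis
    using x_vs_y y_vs_z x_vs_z by (cases "p \<le> q"; cases "q \<le> r"; cases "p \<le> r") auto
qed

(* Existence: with y = 1 and x = m, the first equation gives z = (2 - m^2)/(5m - 6), and the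
   second becomes P m = 0 for a polynomial P that changes sign on [6/5, 7/5]. *)
lemma positive_equilibria_on_ray:
  fixes x y z x' y' z' :: real
  assumes pos: "0 < x" "0 < y" "0 < z" "0 < x'" "0 < y'" "0 < z'"
    and eqs: "equilibrium_eqs x y z" "equilibrium_eqs x' y' z'"
  shows "\<exists>p>0. x' = p*x \<and> y' = p*y \<and> z' = p*z"
proof -
  have scaled: "equilibrium_eqs ((x'/x) * x) ((y'/y) * y) ((z'/z) * z)"
    using eqs(2) pos by simp
  have "x'/x = y'/y \<and> y'/y = z'/z"
    by (rule equilibria_proportional[OF pos(1-3) _ _ _ eqs(1) scaled]) (use pos in simp_all)
  then have ratio_y: "x'/x = y'/y" and ratio_z: "x'/x = z'/z" by simp_all
  have "0 < x'/x" "x' = (x'/x) * x" using pos by simp_all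
  moreover have "y' = (x'/x) * y" unfolding ratio_y using pos by simp
  moreover have "z' = (x'/x) * z" unfolding ratio_z using pos by simp
  ultimately show ?thesis by blast
qed

lemma exists_positive_equilibrium:
  "\<exists>x y z. 0 < x \<and> 0 < y \<and> 0 < z \<and> equilibrium_eqs x y z"
proof -
  define P :: "real \<Rightarrow> real" where
    "P m = (2 + 4*m) * (5*m - 6)^2 - 3 * (2 - m^2)^2 - 5*m * (2 - m^2) * (5*m - 6)" for m
  have "P (6/5) < 0" "0 < P (7/5)" by (simp_all add: P_def power2_eq_square)
  moreover have "continuous_on {6/5..7/5} P" unfolding P_def by (intro continuous_intros)
  ultimately obtain m where m: "6/5 \<le> m" "m \<le> 7/5" "P m = 0"
    using IVT'[of P "6/5" 0 "7/5"] by force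
  with \<open>P (6/5) < 0\<close> have "6/5 < m" by (cases "m = 6/5") auto
  then have denom: "0 < 5*m - 6" by simp
  have "m^2 \<le> (7/5)^2" using m by (intro power_mono) auto
  then have numer: "0 < 2 - m^2" by (simp add: power2_eq_square)
  define z where "z = (2 - m^2) / (5*m - 6)"
  have z_pos: "0 < z" unfolding z_def using denom numer by simp
  have z_eq: "z * (5*m - 6) = 2 - m^2" unfolding z_def using denom by simp
  have flux_ab: "m^2 - 6*1*z = 2*1^2 - 5*m*z"
    using z_eq by (simp add: algebra_simps)
  have "(2 - 5*m*z) * (5*m - 6)^2 - (3*z^2 - 4*m) * (5*m - 6)^2
      = (2 + 4*m) * (5*m - 6)^2 - 3 * (z * (5*m - 6))^2 - 5*m * (z * (5*m - 6)) * (5*m - 6)"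
    by (simp add: algebra_simps power2_eq_square)
  also have "\<dots> = P m" unfolding z_eq P_def ..
  finally have "(2 - 5*m*z) * (5*m - 6)^2 = (3*z^2 - 4*m) * (5*m - 6)^2" using m(3) by simp
  then have flux_bc: "2*1^2 - 5*m*z = 3*z^2 - 4*m*1" using denom by simp
  show ?thesis
    using flux_ab flux_bc z_pos \<open>6/5 < m\<close> unfolding equilibrium_eqs_def
    by (intro exI[of _ m] exI[of _ 1] exI[of _ z]) simp
qed

(* The positive equilibria form a single ray, which meets each class x + y + z = c once. *)
lemma unique_equilibrium_in_class:
  assumes "0 < c"
  shows "\<exists>!s. positive_equilibrium netN' rate s \<and> fst s + fst (snd s) + snd (snd s) = c"
proof -
  obtain x y z where xyz: "0 < x" "0 < y" "0 < z" "equilibrium_eqs x y z"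
    using exists_positive_equilibrium by blast
  define t where "t = c / (x + y + z)"
  have t_pos: "0 < t" unfolding t_def using assms xyz by simp
  have "t * (x + y + z) = c" unfolding t_def using xyz by simp
  then have t_sum: "t*x + t*y + t*z = c" by (simp add: algebra_simps)
  show ?thesis
  proof (rule ex1I[of _ "(t*x, t*y, t*z)"])
    show "positive_equilibrium netN' rate (t*x, t*y, t*z)
        \<and> fst (t*x, t*y, t*z) + fst (snd (t*x, t*y, t*z)) + snd (snd (t*x, t*y, t*z)) = c"
      using t_pos t_sum xyz equilibrium_eqs_scale[OF xyz(4)]
      by (simp add: positive_equilibrium_netN'_iff)
  next
    fix s assume s: "positive_equilibrium netN' rate s \<and> fst s + fst (snd s) + snd (snd s) = c"
    obtain x' y' z' where s_eq: "s = (x', y', z')" by (cases s)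
    have s': "0 < x'" "0 < y'" "0 < z'" "equilibrium_eqs x' y' z'" "x' + y' + z' = c"
      using s by (auto simp: s_eq positive_equilibrium_netN'_iff)
    obtain p where p: "x' = p*x" "y' = p*y" "z' = p*z"
      using positive_equilibria_on_ray[OF xyz(1-3) s'(1-3) xyz(4) s'(4)] by blast
    have "p * (x + y + z) = c"
      using s'(5) unfolding p by (simp add: algebra_simps)
    then have "p = t" unfolding t_def using xyz by (simp add: field_simps)
    then show "s = (t*x, t*y, t*z)" using p s_eq by simp
  qed
qed

theorem mainTheorem7:
  shows "mass_action netN rate = mass_action netN' rate
    \<and> weakly_reversible netN' \<and> deficiency netN' = 1
    \<and> (\<forall>c::real. c > 0 \<longrightarrow>
         (\<exists>!s. positive_equilibrium netN' rate s \<and> fst s + fst (snd s) + snd (snd s) = c))"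
  using mass_action_netN_eq_netN' weakly_reversible_netN' deficiency_netN'
    unique_equilibrium_in_class by blast

end
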